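(* Let $H=\mathbb{R}^n$ be the (not necessarily orthogonal) direct sum of two subspaces $X$ and $Y$. If $\mathcal{F}_1$ is a frame for $X$ with the exact PR-redundancy property and $\mathcal{F}_2$ is a frame for $Y$ with the exact PR-redundancy property, then $\mathcal{F}=\mathcal{F}_1\cup\mathcal{F}_2$ is a frame for $H$ with the exact PR-redundancy property.
   Context: For a finite-dimensional real inner product space $V$ (here $V=X$, $Y$, or $H$ with the inner product inherited from $\mathbb{R}^n$), a frame $\mathcal{G}=\{g_i\}_{i=1}^N$ for $V$ is a finite sequence in $V$ spanning $V$. Let $\mathcal{S}_2(V)$ be the set of self-adjoint operators on $V$ of rank at most $2$, and for $\Lambda\subseteq\{1,\dots,N\}$ let $\Theta_{L(\mathcal{G}_\Lambda)}(A)=(\langle Ag_i,g_i\rangle)_{i\in\Lambda}$ for self-adjoint $A$ on $V$. $\mathcal{G}$ has the exact PR-redundancy property (as a frame for $V$) if for every proper subset $\Lambda\subsetneq\{1,\dots,N\}$, $\ker(\Theta_{L(\mathcal{G}_\Lambda)})\cap\mathcal{S}_2(V)\neq\ker(\Theta_{L(\mathcal{G})})\cap\mathcal{S}_2(V)$. The union $\mathcal{F}_1\cup\mathcal{F}_2$ means the concatenated sequence. *)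

theory Defs
  imports "HOL-Analysis.Analysis"
begin

(* Operators on a subspace V of R^n are represented canonically as linear maps on
   R^n that map V into V and vanish on the orthogonal complement of V.
   This gives a bijection with linear operators V -> V. *)
definition ops_on :: "(real^'n) set \<Rightarrow> (real^'n \<Rightarrow> real^'n) set" where
  "ops_on V = {A. linear A \<and> A ` V \<subseteq> V \<and> (\<forall>x. (\<forall>v\<in>V. v \<bullet> x = 0) \<longrightarrow> A x = 0)}"

definition S2 :: "(real^'n) set \<Rightarrow> (real^'n \<Rightarrow> real^'n) set" where
  "S2 V = {A \<in> ops_on V. (\<forall>x\<in>V. \<forall>y\<in>V. A x \<bullet> y = x \<bullet> A y) \<and> dim (A ` V) \<le> 2}"

definition kerS2 :: "(real^'n) set \<Rightarrow> (real^'n) list \<Rightarrow> nat set \<Rightarrow> (real^'n \<Rightarrow> real^'n) set" where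
  "kerS2 V G \<Lambda> = {A \<in> S2 V. \<forall>i\<in>\<Lambda>. A (G ! i) \<bullet> (G ! i) = 0}"

definition is_frame :: "(real^'n) set \<Rightarrow> (real^'n) list \<Rightarrow> bool" where
  "is_frame V G \<longleftrightarrow> set G \<subseteq> V \<and> span (set G) = V"

definition exact_PR_redundancy :: "(real^'n) set \<Rightarrow> (real^'n) list \<Rightarrow> bool" where
  "exact_PR_redundancy V G \<longleftrightarrow>
     (\<forall>\<Lambda>. \<Lambda> \<subset> {..<length G} \<longrightarrow> kerS2 V G \<Lambda> \<noteq> kerS2 V G {..<length G})"

end

theory Submission
  imports Defs
begin

text \<open>Exact PR-redundancy of G means that for every j some A in S_2(V) has a quadratic form
  vanishing at every g_i with i \<noteq> j but not at g_j. If P is the projection onto X along Y,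
  then P* A P is self-adjoint on H of rank at most 2, and its quadratic form at h is that of A
  at P h. So a witness A for F1 in X becomes a witness on H that is unchanged on F1 and vanishes
  on Y, in particular on F2; and symmetrically for F2.\<close>

definition PR_separates ::
    "(real^'n) set \<Rightarrow> (real^'n) list \<Rightarrow> nat \<Rightarrow> (real^'n \<Rightarrow> real^'n) \<Rightarrow> bool" where
  "PR_separates V G j A \<longleftrightarrow>
     A \<in> S2 V \<and> (\<forall>i<length G. i \<noteq> j \<longrightarrow> A (G!i) \<bullet> G!i = 0) \<and> A (G!j) \<bullet> G!j \<noteq> 0"

lemma exact_PR_redundancy_iff_separates:
  "exact_PR_redundancy V G \<longleftrightarrow> (\<forall>j<length G. \<exists>A. PR_separates V G j A)"
proof
  assume epr: "exact_PR_redundancy V G"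
  show "\<forall>j<length G. \<exists>A. PR_separates V G j A"
  proof (intro allI impI)
    fix j assume j: "j < length G"
    let ?\<Lambda> = "{..<length G} - {j}"
    have "kerS2 V G {..<length G} \<subseteq> kerS2 V G ?\<Lambda>"
      unfolding kerS2_def by auto
    moreover have "?\<Lambda> \<subset> {..<length G}"
      using j by auto
    then have "kerS2 V G ?\<Lambda> \<noteq> kerS2 V G {..<length G}"
      using epr unfolding exact_PR_redundancy_def by blast
    ultimately obtain A where A: "A \<in> kerS2 V G ?\<Lambda>" "A \<notin> kerS2 V G {..<length G}"
      by blast
    then have "A \<in> S2 V" "\<forall>i<length G. i \<noteq> j \<longrightarrow> A (G!i) \<bullet> G!i = 0"
      unfolding kerS2_def by auto
    moreover have "A (G!j) \<bullet> G!j \<noteq> 0"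
      using A calculation unfolding kerS2_def by auto
    ultimately show "\<exists>A. PR_separates V G j A"
      unfolding PR_separates_def by blast
  qed
next
  assume sep: "\<forall>j<length G. \<exists>A. PR_separates V G j A"
  show "exact_PR_redundancy V G"
    unfolding exact_PR_redundancy_def
  proof (intro allI impI)
    fix \<Lambda> assume \<Lambda>: "\<Lambda> \<subset> {..<length G}"
    then obtain j where j: "j < length G" "j \<notin> \<Lambda>" by auto
    then obtain A where "PR_separates V G j A" using sep by blast
    then have "A \<in> kerS2 V G \<Lambda> - kerS2 V G {..<length G}"
      using \<Lambda> j unfolding PR_separates_def kerS2_def by auto
    then show "kerS2 V G \<Lambda> \<noteq> kerS2 V G {..<length G}" by blast
  qed
qed

lemma direct_sum_projection:
  fixes X Y :: "'a::real_vector set"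
  assumes "subspace X" "subspace Y" "X \<inter> Y = {0}" "X + Y = UNIV"
  obtains P where "linear P" "\<And>h. P h \<in> X" "\<And>x. x \<in> X \<Longrightarrow> P x = x" "\<And>y. y \<in> Y \<Longrightarrow> P y = 0"
proof -
  have ex: "\<exists>x. x \<in> X \<and> h - x \<in> Y" for h
  proof -
    obtain x y where "x \<in> X" "y \<in> Y" "h = x + y"
      using assms(4) by (metis UNIV_I set_plus_elim)
    then show ?thesis by (intro exI[of _ x]) auto
  qed
  have unique: "x = x'" if "x \<in> X" "h - x \<in> Y" "x' \<in> X" "h - x' \<in> Y" for h x x'
  proof -
    have "x - x' \<in> X" using assms(1) that by (simp add: subspace_diff)
    moreover have "x - x' \<in> Y" using subspace_diff[OF assms(2) that(4,2)] by simp
    ultimately have "x - x' \<in> X \<inter> Y" by simp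
    then show ?thesis using assms(3) by simp
  qed
  define P where "P h = (SOME x. x \<in> X \<and> h - x \<in> Y)" for h
  have P: "P h \<in> X" "h - P h \<in> Y" for h
    unfolding P_def using someI_ex[OF ex] by blast+
  have P_eq: "P h = x" if "x \<in> X" "h - x \<in> Y" for h x
    using unique P that by blast
  have "linear P"
  proof (rule linearI)
    fix a b
    have "P a + P b \<in> X" using subspace_add[OF assms(1) P(1) P(1)] .
    moreover have "(a + b) - (P a + P b) \<in> Y"
      using subspace_add[OF assms(2) P(2) P(2), of a b] by (simp add: algebra_simps)
    ultimately show "P (a + b) = P a + P b" by (rule P_eq)
  next
    fix c :: real and a
    have "c *\<^sub>R P a \<in> X" using subspace_scale[OF assms(1) P(1)] .
    moreover have "c *\<^sub>R a - c *\<^sub>R P a \<in> Y"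
      using subspace_scale[OF assms(2) P(2), of c a] by (simp add: scaleR_diff_right)
    ultimately show "P (c *\<^sub>R a) = c *\<^sub>R P a" by (rule P_eq)
  qed
  moreover have "P x = x" if "x \<in> X" for x
    using P_eq that assms(2) by (simp add: subspace_0)
  moreover have "P y = 0" if "y \<in> Y" for y
    using P_eq that assms(1) by (simp add: subspace_0)
  ultimately show thesis using that P by blast
qed

lemma pullback_in_S2:
  fixes P A :: "real^'n \<Rightarrow> real^'n"
  assumes "linear P" "\<And>h. P h \<in> X" "A \<in> S2 X"
  shows "(\<lambda>h. adjoint P (A (P h))) \<in> S2 UNIV"
proof -
  let ?B = "\<lambda>h. adjoint P (A (P h))"
  have "linear A" and A_sym: "\<forall>x\<in>X. \<forall>y\<in>X. A x \<bullet> y = x \<bullet> A y" and "dim (A ` X) \<le> 2"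
    using assms(3) unfolding S2_def ops_on_def by auto
  have "linear ?B"
    using linear_compose[OF linear_compose[OF assms(1) \<open>linear A\<close>] adjoint_linear[OF assms(1)]]
    by (simp add: o_def)
  have "?B x \<bullet> y = x \<bullet> ?B y" for x y
  proof -
    have "?B x \<bullet> y = A (P x) \<bullet> P y" by (simp add: adjoint_clauses(2)[OF assms(1)])
    also have "\<dots> = P x \<bullet> A (P y)" using A_sym assms(2) by blast
    also have "\<dots> = x \<bullet> ?B y" by (simp add: adjoint_clauses(1)[OF assms(1)])
    finally show ?thesis .
  qed
  moreover have "dim (range ?B) \<le> 2"
  proof -
    have "range ?B \<subseteq> adjoint P ` (A ` X)" using assms(2) by auto
    then have "dim (range ?B) \<le> dim (adjoint P ` (A ` X))" by (rule dim_subset)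
    also have "\<dots> \<le> dim (A ` X)" by (rule dim_image_le[OF adjoint_linear[OF assms(1)]])
    finally show ?thesis using \<open>dim (A ` X) \<le> 2\<close> by simp
  qed
  moreover have "?B x = 0" if "\<forall>v\<in>UNIV. v \<bullet> x = 0" for x
    using that[rule_format, of x] linear_0[OF \<open>linear ?B\<close>] by simp
  ultimately show ?thesis
    using \<open>linear ?B\<close> unfolding S2_def ops_on_def by auto
qed

lemma pullback_quadratic_form:
  fixes P A :: "real^'n \<Rightarrow> real^'n"
  assumes "linear P"
  shows "adjoint P (A (P h)) \<bullet> h = A (P h) \<bullet> P h"
  by (simp add: adjoint_clauses(2)[OF assms])

lemma PR_separates_lift_along_complement:
  fixes X Y :: "(real^'n) set" and G :: "(real^'n) list"
  assumes "subspace X" "subspace Y" "X \<inter> Y = {0}" "X + Y = UNIV"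
    and "set G \<subseteq> X" "PR_separates X G j A" "j < length G"
  obtains B where "PR_separates UNIV G j B" "\<forall>y\<in>Y. B y \<bullet> y = 0"
proof -
  obtain P where P: "linear P" "\<And>h. P h \<in> X" "\<And>x. x \<in> X \<Longrightarrow> P x = x" "\<And>y. y \<in> Y \<Longrightarrow> P y = 0"
    using direct_sum_projection[OF assms(1-4)] by blast
  let ?B = "\<lambda>h. adjoint P (A (P h))"
  have "A \<in> S2 X" using assms(6) unfolding PR_separates_def by simp
  then have "A 0 = 0" unfolding S2_def ops_on_def by (auto simp: linear_0)
  have "?B (G!i) \<bullet> G!i = A (G!i) \<bullet> G!i" if "i < length G" for i
    using pullback_quadratic_form[OF P(1), of A "G!i"] P(3)[of "G!i"] assms(5) nth_mem[OF that] by auto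
  then have "PR_separates UNIV G j ?B"
    using assms(6,7) pullback_in_S2[OF P(1,2) \<open>A \<in> S2 X\<close>]
    unfolding PR_separates_def by auto
  moreover have "\<forall>y\<in>Y. ?B y \<bullet> y = 0"
    by (metis P(1,4) \<open>A 0 = 0\<close> inner_zero_left pullback_quadratic_form)
  ultimately show thesis by (rule that)
qed

lemma exact_PR_redundancy_lift_along_complement:
  fixes X Y :: "(real^'n) set" and G :: "(real^'n) list"
  assumes "subspace X" "subspace Y" "X \<inter> Y = {0}" "X + Y = UNIV"
    and "is_frame X G" "exact_PR_redundancy X G"
  shows "\<forall>j<length G. \<exists>B. PR_separates UNIV G j B \<and> (\<forall>y\<in>Y. B y \<bullet> y = 0)"
proof (intro allI impI)
  fix j assume j: "j < length G"
  have "set G \<subseteq> X" using assms(5) unfolding is_frame_def by simp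
  moreover obtain A where "PR_separates X G j A"
    using assms(6) j exact_PR_redundancy_iff_separates by blast
  ultimately obtain B where "PR_separates UNIV G j B" "\<forall>y\<in>Y. B y \<bullet> y = 0"
    using PR_separates_lift_along_complement[OF assms(1-4) _ _ j] by blast
  then show "\<exists>B. PR_separates UNIV G j B \<and> (\<forall>y\<in>Y. B y \<bullet> y = 0)" by blast
qed

lemma PR_separates_append_left:
  assumes "PR_separates V F1 j A" "j < length F1" "\<forall>v\<in>set F2. A v \<bullet> v = 0"
  shows "PR_separates V (F1 @ F2) j A"
  using assms unfolding PR_separates_def by (auto simp: nth_append)

lemma PR_separates_append_right:
  assumes "PR_separates V F2 k A" "\<forall>v\<in>set F1. A v \<bullet> v = 0"
  shows "PR_separates V (F1 @ F2) (length F1 + k) A"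
  using assms unfolding PR_separates_def by (auto simp: nth_append)

lemma exact_PR_redundancy_appendI:
  assumes "\<forall>j<length F1. \<exists>B. PR_separates V F1 j B \<and> (\<forall>v\<in>set F2. B v \<bullet> v = 0)"
    and "\<forall>k<length F2. \<exists>B. PR_separates V F2 k B \<and> (\<forall>v\<in>set F1. B v \<bullet> v = 0)"
  shows "exact_PR_redundancy V (F1 @ F2)"
  unfolding exact_PR_redundancy_iff_separates
proof (intro allI impI)
  fix j assume j: "j < length (F1 @ F2)"
  show "\<exists>B. PR_separates V (F1 @ F2) j B"
  proof (cases "j < length F1")
    case True
    then show ?thesis using assms(1) PR_separates_append_left by blast
  next
    case False
    then obtain k where "j = length F1 + k" "k < length F2"
      using j by (metis add_diff_inverse_nat length_append nat_add_left_cancel_less)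
    then show ?thesis using assms(2) PR_separates_append_right by blast
  qed
qed

lemma frame_append_direct_sum:
  assumes "is_frame X F1" "is_frame Y F2" "{x + y | x y. x \<in> X \<and> y \<in> Y} = UNIV"
  shows "is_frame UNIV (F1 @ F2)"
  using assms span_Un[of "set F1" "set F2"] unfolding is_frame_def by simp

theorem lemma1p8:
  fixes X Y :: "(real^'n) set" and F1 F2 :: "(real^'n) list"
  assumes "subspace X" and "subspace Y"
    and "X \<inter> Y = {0}"
    and "{x + y | x y. x \<in> X \<and> y \<in> Y} = UNIV"
    and "is_frame X F1" and "exact_PR_redundancy X F1"
    and "is_frame Y F2" and "exact_PR_redundancy Y F2"
  shows "is_frame UNIV (F1 @ F2) \<and> exact_PR_redundancy UNIV (F1 @ F2)"
proof
  show "is_frame UNIV (F1 @ F2)" using frame_append_direct_sum assms(4,5,7) by blast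
  have "X + Y = {x + y | x y. x \<in> X \<and> y \<in> Y}" by (auto simp: set_plus_def)
  then have "X + Y = UNIV" "Y + X = UNIV" using assms(4) by (simp_all add: add.commute)
  moreover have "Y \<inter> X = {0}" using assms(3) by blast
  moreover have "set F1 \<subseteq> X" "set F2 \<subseteq> Y"
    using assms(5,7) unfolding is_frame_def by auto
  ultimately show "exact_PR_redundancy UNIV (F1 @ F2)"
    using exact_PR_redundancy_lift_along_complement[OF assms(1-3) _ assms(5,6)]
      exact_PR_redundancy_lift_along_complement[OF assms(2,1) _ _ assms(7,8)]
    by (intro exact_PR_redundancy_appendI) (meson subsetD)+
qed

end
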